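(* The functor $F$ is strong monoidal from the monoidal category $(\mathbf{Perm}\text{-}\mathbf{Nom},\otimes,1)$ to $(\mathbf{Sb}\text{-}\mathbf{Nom},\times,1)$. In particular, for all nominal $\mathrm{Perm}$-sets $X,Y$, the map $p=\langle F(\pi_1),F(\pi_2)\rangle\colon F(X\otimes Y)\to F(X)\times F(Y)$, i.e. $p([m,(x,y)])=([m,x],[m,y])$, is an isomorphism of nominal $\mathrm{Sb}$-sets, natural in $X$ and $Y$.
   Context: Let $\mathbb{A}$ be a countably infinite set of atoms; $\mathrm{Sb}$ is the monoid of functions $\mathbb{A}\to\mathbb{A}$ moving only finitely many atoms (under composition), $\mathrm{Perm}\subseteq\mathrm{Sb}$ the group of bijections in it. For $M\in\{\mathrm{Sb},\mathrm{Perm}\}$, an $M$-set is a set with a monoid action; $C\subseteq\mathbb{A}$ is an $M$-support of $x$ if $m_1|_C=m_2|_C$ implies $m_1x=m_2x$ for $m_1,m_2\in M$; nominal $M$-sets are $M$-sets whose elements all have finite supports; $M\text{-}\mathbf{Nom}$ is the category of nominal $M$-sets with equivariant maps. Products in $M\text{-}\mathbf{Nom}$ are Cartesian products with pointwise action, and $1$ is a singleton. Two elements $x,y$ of nominal $\mathrm{Perm}$-sets are separated, written $x\perp y$, if they have disjoint $\mathrm{Perm}$-supports; the separated product is $X\otimes Y=\{(x,y)\in X\times Y\mid x\perp y\}$ with pointwise action, and $\pi_1,\pi_2$ are the projections. For a nominal $\mathrm{Perm}$-set $X$, $F(X)$ is $\mathrm{Sb}\times X$ modulo the least equivalence relation $\sim$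 containing $(m,gx)\sim(mg,x)$ ($g\in\mathrm{Perm}$) and $(m,x)\sim(m',x)$ whenever $m|_C=m'|_C$ for some $\mathrm{Perm}$-support $C$ of $x$; classes are written $[m,x]$, with action $n\cdot[m,x]=[nm,x]$, and $F(f)([m,x])=[m,f(x)]$. This $F$ is a functor $\mathbf{Perm}\text{-}\mathbf{Nom}\to\mathbf{Sb}\text{-}\mathbf{Nom}$. *)

theory Defs
  imports Main "HOL-Library.Countable"
begin

text \<open>Atoms are the elements of a type 'a (assumed countable and infinite in the theorem).
  Substitutions are functions 'a => 'a moving finitely many atoms.\<close>

definition Sb :: "('a \<Rightarrow> 'a) set" where
  "Sb = {m. finite {a. m a \<noteq> a}}"

definition Perm :: "('a \<Rightarrow> 'a) set" where
  "Perm = {g \<in> Sb. bij g}"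

definition is_Mset :: "('a \<Rightarrow> 'a) set \<Rightarrow> 'x set \<Rightarrow> (('a \<Rightarrow> 'a) \<Rightarrow> 'x \<Rightarrow> 'x) \<Rightarrow> bool" where
  "is_Mset M X act \<longleftrightarrow>
     (\<forall>m\<in>M. \<forall>x\<in>X. act m x \<in> X) \<and> (\<forall>x\<in>X. act id x = x) \<and>
     (\<forall>m1\<in>M. \<forall>m2\<in>M. \<forall>x\<in>X. act (m1 \<circ> m2) x = act m1 (act m2 x))"

definition is_support :: "('a \<Rightarrow> 'a) set \<Rightarrow> (('a \<Rightarrow> 'a) \<Rightarrow> 'x \<Rightarrow> 'x) \<Rightarrow> 'a set \<Rightarrow> 'x \<Rightarrow> bool" where
  "is_support M act C x \<longleftrightarrow>
     (\<forall>m1\<in>M. \<forall>m2\<in>M. (\<forall>a\<in>C. m1 a = m2 a) \<longrightarrow> act m1 x = act m2 x)"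

definition nominal :: "('a \<Rightarrow> 'a) set \<Rightarrow> 'x set \<Rightarrow> (('a \<Rightarrow> 'a) \<Rightarrow> 'x \<Rightarrow> 'x) \<Rightarrow> bool" where
  "nominal M X act \<longleftrightarrow> is_Mset M X act \<and> (\<forall>x\<in>X. \<exists>C. finite C \<and> is_support M act C x)"

definition equivariant :: "('a \<Rightarrow> 'a) set \<Rightarrow> 'x set \<Rightarrow> (('a \<Rightarrow> 'a) \<Rightarrow> 'x \<Rightarrow> 'x)
    \<Rightarrow> 'y set \<Rightarrow> (('a \<Rightarrow> 'a) \<Rightarrow> 'y \<Rightarrow> 'y) \<Rightarrow> ('x \<Rightarrow> 'y) \<Rightarrow> bool" where
  "equivariant M X actX Y actY f \<longleftrightarrow>
     (\<forall>x\<in>X. f x \<in> Y) \<and> (\<forall>m\<in>M. \<forall>x\<in>X. f (actX m x) = actY m (f x))"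

definition prod_act :: "('m \<Rightarrow> 'x \<Rightarrow> 'x) \<Rightarrow> ('m \<Rightarrow> 'y \<Rightarrow> 'y) \<Rightarrow> 'm \<Rightarrow> 'x \<times> 'y \<Rightarrow> 'x \<times> 'y" where
  "prod_act actX actY m = (\<lambda>(x, y). (actX m x, actY m y))"

definition separated :: "(('a \<Rightarrow> 'a) \<Rightarrow> 'x \<Rightarrow> 'x) \<Rightarrow> (('a \<Rightarrow> 'a) \<Rightarrow> 'y \<Rightarrow> 'y) \<Rightarrow> 'x \<Rightarrow> 'y \<Rightarrow> bool" where
  "separated actX actY x y \<longleftrightarrow>
     (\<exists>C D. finite C \<and> finite D \<and> C \<inter> D = {} \<and> is_support Perm actX C x \<and> is_support Perm actY D y)"

definition sep_prod :: "'x set \<Rightarrow> (('a \<Rightarrow> 'a) \<Rightarrow> 'x \<Rightarrow> 'x) \<Rightarrow> 'y set \<Rightarrow> (('a \<Rightarrow> 'a) \<Rightarrow> 'y \<Rightarrow> 'y) \<Rightarrow> ('x \<times> 'y) set" where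
  "sep_prod X actX Y actY = {(x, y). x \<in> X \<and> y \<in> Y \<and> separated actX actY x y}"

text \<open>The least equivalence relation on Sb x X generated by the two clauses defining F.\<close>
inductive_set F_rel :: "'x set \<Rightarrow> (('a \<Rightarrow> 'a) \<Rightarrow> 'x \<Rightarrow> 'x) \<Rightarrow> ((('a \<Rightarrow> 'a) \<times> 'x) \<times> (('a \<Rightarrow> 'a) \<times> 'x)) set"
  for X :: "'x set" and act :: "('a \<Rightarrow> 'a) \<Rightarrow> 'x \<Rightarrow> 'x" where
  F_refl: "m \<in> Sb \<Longrightarrow> x \<in> X \<Longrightarrow> ((m, x), (m, x)) \<in> F_rel X act"
| F_perm: "m \<in> Sb \<Longrightarrow> g \<in> Perm \<Longrightarrow> x \<in> X \<Longrightarrow> ((m, act g x), (m \<circ> g, x)) \<in> F_rel X act"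
| F_supp: "m \<in> Sb \<Longrightarrow> m' \<in> Sb \<Longrightarrow> x \<in> X \<Longrightarrow> finite C \<Longrightarrow> is_support Perm act C x \<Longrightarrow>
             (\<forall>a\<in>C. m a = m' a) \<Longrightarrow> ((m, x), (m', x)) \<in> F_rel X act"
| F_sym: "(p, q) \<in> F_rel X act \<Longrightarrow> (q, p) \<in> F_rel X act"
| F_trans: "(p, q) \<in> F_rel X act \<Longrightarrow> (q, r) \<in> F_rel X act \<Longrightarrow> (p, r) \<in> F_rel X act"

definition F_set :: "'x set \<Rightarrow> (('a \<Rightarrow> 'a) \<Rightarrow> 'x \<Rightarrow> 'x) \<Rightarrow> (('a \<Rightarrow> 'a) \<times> 'x) set set" where
  "F_set X act = (Sb \<times> X) // F_rel X act"

definition F_cls :: "'x set \<Rightarrow> (('a \<Rightarrow> 'a) \<Rightarrow> 'x \<Rightarrow> 'x) \<Rightarrow> ('a \<Rightarrow> 'a) \<Rightarrow> 'x \<Rightarrow> (('a \<Rightarrow> 'a) \<times> 'x) set" where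
  "F_cls X act m x = F_rel X act `` {(m, x)}"

definition F_act :: "'x set \<Rightarrow> (('a \<Rightarrow> 'a) \<Rightarrow> 'x \<Rightarrow> 'x) \<Rightarrow> ('a \<Rightarrow> 'a) \<Rightarrow> (('a \<Rightarrow> 'a) \<times> 'x) set \<Rightarrow> (('a \<Rightarrow> 'a) \<times> 'x) set" where
  "F_act X act n c = (let (m, x) = (SOME p. p \<in> c) in F_cls X act (n \<circ> m) x)"

text \<open>F(f)[m,x] = [m, f x]; the first two arguments are the target Perm-set.\<close>
definition F_map :: "'y set \<Rightarrow> (('a \<Rightarrow> 'a) \<Rightarrow> 'y \<Rightarrow> 'y) \<Rightarrow> ('x \<Rightarrow> 'y) \<Rightarrow> (('a \<Rightarrow> 'a) \<times> 'x) set \<Rightarrow> (('a \<Rightarrow> 'a) \<times> 'y) set" where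
  "F_map Y actY f c = (let (m, x) = (SOME p. p \<in> c) in F_cls Y actY m (f x))"

definition p_map :: "'x set \<Rightarrow> (('a \<Rightarrow> 'a) \<Rightarrow> 'x \<Rightarrow> 'x) \<Rightarrow> 'y set \<Rightarrow> (('a \<Rightarrow> 'a) \<Rightarrow> 'y \<Rightarrow> 'y)
    \<Rightarrow> (('a \<Rightarrow> 'a) \<times> ('x \<times> 'y)) set \<Rightarrow> (('a \<Rightarrow> 'a) \<times> 'x) set \<times> (('a \<Rightarrow> 'a) \<times> 'y) set" where
  "p_map X actX Y actY c = (F_map X actX fst c, F_map Y actY snd c)"

end

theory Submission
  imports Defs
begin

text \<open>
  Everything rests on least supports: since there are infinitely many atoms, the finite
  \<open>Perm\<close>-supports of an element are closed under intersection, so each element \<open>x\<close> of a nominal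
  \<open>Perm\<close>-set has a least one, \<open>supp x\<close>, and \<open>x \<bottom> y\<close> means \<open>supp x \<inter> supp y = {}\<close>.

  Surjectivity of \<open>p\<close>: given \<open>[m\<^sub>1, x]\<close> and \<open>[m\<^sub>2, y]\<close>, rename \<open>y\<close> by a permutation \<open>\<tau>\<close> so that its
  support avoids \<open>supp x\<close>; a single substitution acting as \<open>m\<^sub>1\<close> on \<open>supp x\<close> and as \<open>m\<^sub>2 \<circ> \<tau>\<^sup>-\<^sup>1\<close>
  elsewhere then represents both classes at once.

  Injectivity of \<open>p\<close>: the generating relation of \<open>F\<close> only ever relates \<open>(m, x)\<close> to \<open>(m', g x)\<close> with
  \<open>g\<close> a permutation and \<open>m = m' \<circ> g\<close> on \<open>supp x\<close>. If two separated pairs have the same image, the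
  permutations obtained for the two components act on disjoint supports with disjoint images, so
  they glue to one permutation relating the pairs.
\<close>

section \<open>Finitely supported substitutions and permutations\<close>

lemma Sb_id: "id \<in> Sb"
  by (simp add: Sb_def)

lemma Sb_comp:
  assumes "m \<in> Sb" and "n \<in> Sb"
  shows "m \<circ> n \<in> Sb"
proof -
  have "{a. (m \<circ> n) a \<noteq> a} \<subseteq> {a. n a \<noteq> a} \<union> {a. m a \<noteq> a}"
    by auto
  then show ?thesis
    using assms unfolding Sb_def by (auto intro: finite_subset)
qed

lemma Sb_override_on:
  assumes "m \<in> Sb" and "n \<in> Sb"
  shows "override_on m n C \<in> Sb"
proof -
  have "{a. override_on m n C a \<noteq> a} \<subseteq> {a. m a \<noteq> a} \<union> {a. n a \<noteq> a}"
    by (auto simp: override_on_def)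
  then show ?thesis
    using assms unfolding Sb_def by (auto intro: finite_subset)
qed

lemma Perm_Sb: "g \<in> Perm \<Longrightarrow> g \<in> Sb"
  by (simp add: Perm_def)

lemma Perm_bij: "g \<in> Perm \<Longrightarrow> bij g"
  by (simp add: Perm_def)

lemma Perm_id: "id \<in> Perm"
  by (simp add: Perm_def Sb_id)

lemma Perm_comp: "g \<in> Perm \<Longrightarrow> h \<in> Perm \<Longrightarrow> g \<circ> h \<in> Perm"
  by (simp add: Perm_def Sb_comp bij_comp)

lemma Perm_inv:
  assumes "g \<in> Perm"
  shows "inv g \<in> Perm"
proof -
  have "bij g"
    using assms by (rule Perm_bij)
  then have "{a. inv g a \<noteq> a} = {a. g a \<noteq> a}"
    by (metis bij_inv_eq_iff)
  then show ?thesis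
    using assms \<open>bij g\<close> by (simp add: Perm_def Sb_def bij_imp_bij_inv)
qed

lemma Perm_inv_comp: "g \<in> Perm \<Longrightarrow> inv g \<circ> g = id"
  by (simp add: Perm_bij bij_is_inj)

lemma Perm_comp_inv: "g \<in> Perm \<Longrightarrow> g \<circ> inv g = id"
  by (meson Perm_bij bij_is_surj surj_iff)

lemma Perm_inv_apply: "g \<in> Perm \<Longrightarrow> inv g (g a) = a"
  by (simp add: Perm_bij bij_is_inj)

text \<open>Match the equinumerous leftovers \<open>f ` S - S\<close> and \<open>S - f ` S\<close> to complete \<open>f\<close> to a bijection of
  \<open>S \<union> f ` S\<close>, and extend it by the identity.\<close>

lemma inj_on_extend_Perm:
  assumes fin: "finite S" and inj: "inj_on f S"
  shows "\<exists>k\<in>Perm. \<forall>a\<in>S. k a = f a"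
proof -
  define T where "T = f ` S"
  have "finite T"
    using fin by (simp add: T_def)
  have "card T = card S"
    using inj by (simp add: T_def card_image)
  then have "card (T - S) = card (S - T)"
    using fin \<open>finite T\<close> by (simp add: card_Diff_subset_Int Int_commute)
  then obtain \<phi> where \<phi>: "bij_betw \<phi> (T - S) (S - T)"
    using fin \<open>finite T\<close> by (metis finite_Diff finite_same_card_bij)
  have "bij_betw (\<lambda>a. if a \<in> S then f a else \<phi> a) (S \<union> (T - S)) (T \<union> (S - T))"
    using inj \<phi> by (intro bij_betw_disjoint_Un) (auto simp: T_def inj_on_imp_bij_betw)
  then have on_ST: "bij_betw (\<lambda>a. if a \<in> S then f a else \<phi> a) (S \<union> T) (S \<union> T)"
    by (simp add: Un_commute)
  define k where "k a = (if a \<in> S \<union> T then (if a \<in> S then f a else \<phi> a) else a)" for a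
  have "bij_betw k (S \<union> T) (S \<union> T)"
    using on_ST by (subst bij_betw_cong[where g = "\<lambda>a. if a \<in> S then f a else \<phi> a"]) (simp_all add: k_def)
  moreover have "bij_betw k (- (S \<union> T)) (- (S \<union> T))"
    by (subst bij_betw_cong[where g = id]) (simp_all add: k_def)
  ultimately have "bij_betw k (S \<union> T \<union> - (S \<union> T)) (S \<union> T \<union> - (S \<union> T))"
    by (rule bij_betw_combine) auto
  then have "bij k"
    by (simp only: Compl_partition)
  have "{a. k a \<noteq> a} \<subseteq> S \<union> T"
    by (auto simp: k_def)
  with fin \<open>finite T\<close> have "finite {a. k a \<noteq> a}"
    by (meson finite_UnI finite_subset)
  with \<open>bij k\<close> have "k \<in> Perm"
    by (simp add: Perm_def Sb_def)
  then show ?thesis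
    by (intro bexI[of _ k]) (simp_all add: k_def)
qed

lemma obtain_fresh_Perm:
  assumes atoms: "infinite (UNIV :: 'a set)"
    and "finite A" and "finite B" and "finite (E :: 'a set)"
  obtains \<tau> where "\<tau> \<in> Perm" and "\<And>a. a \<in> A \<Longrightarrow> \<tau> a = a" and "\<And>b. b \<in> B - A \<Longrightarrow> \<tau> b \<notin> E"
proof -
  have "infinite (- (E \<union> A \<union> B))"
    using assms by (simp add: Compl_eq_Diff_UNIV Diff_infinite_finite)
  then obtain F where F: "F \<subseteq> - (E \<union> A \<union> B)" "finite F" "card F = card (B - A)"
    by (meson infinite_arbitrarily_large)
  then obtain \<phi> where \<phi>: "bij_betw \<phi> (B - A) F"
    using \<open>finite B\<close> by (metis finite_Diff finite_same_card_bij)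
  have "bij_betw (\<lambda>a. if a \<in> A then a else \<phi> a) (A \<union> (B - A)) (A \<union> F)"
    using F bij_betw_id[of A, unfolded id_def] by (intro bij_betw_disjoint_Un \<phi>) auto
  then have inj: "inj_on (\<lambda>a. if a \<in> A then a else \<phi> a) (A \<union> B)"
    by (simp add: bij_betw_def)
  have "finite (A \<union> B)"
    using \<open>finite A\<close> \<open>finite B\<close> by simp
  then obtain k where k: "k \<in> Perm" "\<And>a. a \<in> A \<union> B \<Longrightarrow> k a = (if a \<in> A then a else \<phi> a)"
    using inj_on_extend_Perm[OF _ inj] by blast
  have fresh: "\<phi> b \<notin> E" if "b \<in> B - A" for b
    using F bij_betwE[OF \<phi>] that by blast
  show thesis
  proof (rule that)
    show "k \<in> Perm"
      by (fact k(1))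
    show "k a = a" if "a \<in> A" for a
      using k(2) that by simp
    show "k b \<notin> E" if "b \<in> B - A" for b
      using k(2) that fresh by simp
  qed
qed

lemma Perm_glue:
  assumes "g \<in> Perm" and "h \<in> Perm" and "finite A" and "finite B"
    and "A \<inter> B = {}" and "g ` A \<inter> h ` B = {}"
  shows "\<exists>k\<in>Perm. (\<forall>a\<in>A. k a = g a) \<and> (\<forall>b\<in>B. k b = h b)"
proof -
  have "bij_betw g A (g ` A)" and "bij_betw h B (h ` B)"
    using assms(1,2) by (meson Perm_bij bij_is_inj inj_on_imp_bij_betw inj_on_subset subset_UNIV)+
  then have "bij_betw (\<lambda>a. if a \<in> A then g a else h a) (A \<union> B) (g ` A \<union> h ` B)"
    using assms(5,6) by (rule bij_betw_disjoint_Un)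
  then have "inj_on (\<lambda>a. if a \<in> A then g a else h a) (A \<union> B)"
    by (rule bij_betw_imp_inj_on)
  moreover have "finite (A \<union> B)"
    using assms(3,4) by simp
  ultimately have "\<exists>k\<in>Perm. \<forall>a\<in>A \<union> B. k a = (if a \<in> A then g a else h a)"
    by (rule inj_on_extend_Perm[rotated])
  then obtain k where "k \<in> Perm" and "\<forall>a\<in>A \<union> B. k a = (if a \<in> A then g a else h a)"
    by blast
  with assms(5) show ?thesis
    by (intro bexI[of _ k]) auto
qed

section \<open>Supports\<close>

lemma nominal_imp_Mset: "nominal M X act \<Longrightarrow> is_Mset M X act"
  by (simp add: nominal_def)

lemma Mset_closed: "is_Mset M X act \<Longrightarrow> m \<in> M \<Longrightarrow> x \<in> X \<Longrightarrow> act m x \<in> X"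
  by (simp add: is_Mset_def)

lemma Mset_act_id: "is_Mset M X act \<Longrightarrow> x \<in> X \<Longrightarrow> act id x = x"
  by (simp add: is_Mset_def)

lemma Mset_act_comp:
  "is_Mset M X act \<Longrightarrow> m1 \<in> M \<Longrightarrow> m2 \<in> M \<Longrightarrow> x \<in> X \<Longrightarrow> act (m1 \<circ> m2) x = act m1 (act m2 x)"
  by (simp add: is_Mset_def)

lemma Mset_act_inv:
  assumes "is_Mset Perm X act" and "g \<in> Perm" and "x \<in> X"
  shows "act (inv g) (act g x) = x"
proof -
  have "act (inv g) (act g x) = act (inv g \<circ> g) x"
    using assms by (simp add: Mset_act_comp Perm_inv)
  also have "\<dots> = x"
    using assms by (simp add: Perm_inv_comp Mset_act_id)
  finally show ?thesis .
qed

lemma is_supportD: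
  assumes "is_support M act C x" and "m1 \<in> M" and "m2 \<in> M" and "\<And>a. a \<in> C \<Longrightarrow> m1 a = m2 a"
  shows "act m1 x = act m2 x"
  using assms unfolding is_support_def by blast

lemma is_support_mono: "is_support M act C x \<Longrightarrow> C \<subseteq> D \<Longrightarrow> is_support M act D x"
  unfolding is_support_def by blast

lemma is_support_prod_act_iff:
  "is_support M (prod_act aX aY) C (x, y) \<longleftrightarrow> is_support M aX C x \<and> is_support M aY C y"
  unfolding is_support_def prod_act_def by auto

lemma is_support_fix:
  assumes "is_Mset Perm X act" and "x \<in> X" and "is_support Perm act C x"
    and "\<pi> \<in> Perm" and "\<And>a. a \<in> C \<Longrightarrow> \<pi> a = a"
  shows "act \<pi> x = x"
  using is_supportD[OF assms(3,4) Perm_id] assms(5) Mset_act_id[OF assms(1,2)] by simp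

lemma is_supportI_fix:
  assumes M: "is_Mset Perm X act" and x: "x \<in> X"
    and fixed: "\<And>\<pi>. \<pi> \<in> Perm \<Longrightarrow> (\<And>a. a \<in> C \<Longrightarrow> \<pi> a = a) \<Longrightarrow> act \<pi> x = x"
  shows "is_support Perm act C x"
  unfolding is_support_def
proof (intro ballI impI)
  fix m1 m2
  assume m1: "m1 \<in> Perm" and m2: "m2 \<in> Perm" and agree: "\<forall>a\<in>C. m1 a = m2 a"
  define \<pi> where "\<pi> = inv m2 \<circ> m1"
  have \<pi>: "\<pi> \<in> Perm"
    using m1 m2 by (simp add: \<pi>_def Perm_comp Perm_inv)
  have "m2 \<circ> \<pi> = m1"
    using m2 by (simp add: \<pi>_def Perm_comp_inv flip: comp_assoc)
  then have "act m1 x = act m2 (act \<pi> x)"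
    using Mset_act_comp[OF M m2 \<pi> x] by simp
  also have "act \<pi> x = x"
    using agree m2 by (intro fixed[OF \<pi>]) (simp add: \<pi>_def Perm_inv_apply)
  finally show "act m1 x = act m2 x" .
qed

lemma is_support_image:
  assumes M: "is_Mset Perm X act" and x: "x \<in> X" and g: "g \<in> Perm"
    and supp: "is_support Perm act C x"
  shows "is_support Perm act (g ` C) (act g x)"
  unfolding is_support_def
proof (intro ballI impI)
  fix m1 m2
  assume m: "m1 \<in> Perm" "m2 \<in> Perm" and agree: "\<forall>a\<in>g ` C. m1 a = m2 a"
  have "act (m1 \<circ> g) x = act (m2 \<circ> g) x"
    using agree by (intro is_supportD[OF supp]) (simp_all add: Perm_comp m g)
  then show "act m1 (act g x) = act m2 (act g x)"
    by (simp add: Mset_act_comp[OF M _ g x] m)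
qed

lemma is_support_Int:
  assumes atoms: "infinite (UNIV :: 'a set)" and M: "is_Mset Perm X (act :: ('a \<Rightarrow> 'a) \<Rightarrow> 'x \<Rightarrow> 'x)"
    and x: "x \<in> X" and "finite C" and "finite D"
    and supp_C: "is_support Perm act C x" and supp_D: "is_support Perm act D x"
  shows "is_support Perm act (C \<inter> D) x"
proof (rule is_supportI_fix[OF M x])
  fix \<pi> :: "'a \<Rightarrow> 'a"
  assume \<pi>: "\<pi> \<in> Perm" and fix_CD: "\<And>a. a \<in> C \<inter> D \<Longrightarrow> \<pi> a = a"
  have "finite {a. \<pi> a \<noteq> a}"
    using \<pi> by (simp add: Perm_def Sb_def)
  \<comment> \<open>Rename \<open>D - C\<close> away from everything \<open>\<pi>\<close> moves while fixing \<open>C\<close>; the renamed \<open>D\<close> still supports \<open>x\<close>.\<close>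
  then obtain \<tau> where \<tau>: "\<tau> \<in> Perm" "\<And>a. a \<in> C \<Longrightarrow> \<tau> a = a"
      "\<And>b. b \<in> D - C \<Longrightarrow> \<tau> b \<notin> {a. \<pi> a \<noteq> a}"
    using obtain_fresh_Perm[OF atoms \<open>finite C\<close> \<open>finite D\<close>] by blast
  have "act \<tau> x = x"
    using is_support_fix[OF M x supp_C \<tau>(1,2)] .
  then have supp_\<tau>D: "is_support Perm act (\<tau> ` D) x"
    using is_support_image[OF M x \<tau>(1) supp_D] by simp
  have "\<pi> a = a" if "a \<in> \<tau> ` D" for a
  proof -
    obtain d where d: "d \<in> D" "a = \<tau> d"
      using \<open>a \<in> \<tau> ` D\<close> by blast
    show ?thesis
      using fix_CD \<tau>(2,3) d by (cases "d \<in> C") auto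
  qed
  then show "act \<pi> x = x"
    using is_support_fix[OF M x supp_\<tau>D \<pi>] by blast
qed

text \<open>The least finite support. As a \<open>SOME\<close>-term it is only meaningful where one exists, i.e. for
  elements of nominal \<open>Perm\<close>-sets over infinitely many atoms.\<close>

definition supp :: "(('a \<Rightarrow> 'a) \<Rightarrow> 'x \<Rightarrow> 'x) \<Rightarrow> 'x \<Rightarrow> 'a set" where
  "supp act x = (SOME C. finite C \<and> is_support Perm act C x \<and>
      (\<forall>D. finite D \<and> is_support Perm act D x \<longrightarrow> C \<subseteq> D))"

lemma ex_least_finite_support:
  assumes atoms: "infinite (UNIV :: 'a set)" and N: "nominal Perm X (act :: ('a \<Rightarrow> 'a) \<Rightarrow> 'x \<Rightarrow> 'x)"
    and x: "x \<in> X"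
  shows "\<exists>C. finite C \<and> is_support Perm act C x \<and> (\<forall>D. finite D \<and> is_support Perm act D x \<longrightarrow> C \<subseteq> D)"
proof -
  obtain C0 where "finite C0" "is_support Perm act C0 x"
    using N x by (auto simp: nominal_def)
  then obtain C where C: "finite C" "is_support Perm act C x"
    and min: "\<And>D. finite D \<Longrightarrow> is_support Perm act D x \<Longrightarrow> card C \<le> card D"
    using ex_has_least_nat[of "\<lambda>C. finite C \<and> is_support Perm act C x" C0 card] by blast
  have "C \<subseteq> D" if D: "finite D" "is_support Perm act D x" for D
  proof -
    have "is_support Perm act (C \<inter> D) x"
      using is_support_Int[OF atoms nominal_imp_Mset[OF N] x] C D by blast
    then have "card C \<le> card (C \<inter> D)"
      using min C by simp
    then have "C \<inter> D = C"
      using C by (meson card_seteq inf_le1 finite_Int)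
    then show ?thesis
      by blast
  qed
  with C show ?thesis
    by blast
qed

lemma
  assumes "infinite (UNIV :: 'a set)" and "nominal Perm X (act :: ('a \<Rightarrow> 'a) \<Rightarrow> 'x \<Rightarrow> 'x)"
    and "x \<in> X"
  shows finite_supp: "finite (supp act x)"
    and supp_is_support: "is_support Perm act (supp act x) x"
    and supp_least: "finite D \<Longrightarrow> is_support Perm act D x \<Longrightarrow> supp act x \<subseteq> D"
  using someI_ex[OF ex_least_finite_support[OF assms]] unfolding supp_def by blast+

lemma supp_act:
  assumes atoms: "infinite (UNIV :: 'a set)" and N: "nominal Perm X (act :: ('a \<Rightarrow> 'a) \<Rightarrow> 'x \<Rightarrow> 'x)"
    and x: "x \<in> X" and g: "g \<in> Perm"
  shows "supp act (act g x) = g ` supp act x"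
proof
  have M: "is_Mset Perm X act"
    using N by (rule nominal_imp_Mset)
  have gx: "act g x \<in> X"
    using Mset_closed[OF M g x] .
  show "supp act (act g x) \<subseteq> g ` supp act x"
    using supp_least[OF atoms N gx] is_support_image[OF M x g supp_is_support[OF atoms N x]]
      finite_supp[OF atoms N x] by simp
  have "is_support Perm act (inv g ` supp act (act g x)) x"
    using is_support_image[OF M gx Perm_inv[OF g] supp_is_support[OF atoms N gx]]
    by (simp add: Mset_act_inv[OF M g x])
  then have "supp act x \<subseteq> inv g ` supp act (act g x)"
    using supp_least[OF atoms N x] finite_supp[OF atoms N gx] by simp
  then have "g ` supp act x \<subseteq> (g \<circ> inv g) ` supp act (act g x)"
    by (auto simp: image_comp[symmetric])
  then show "g ` supp act x \<subseteq> supp act (act g x)"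
    using g by (simp add: Perm_comp_inv)
qed

lemma separated_iff_disjoint_supp:
  assumes atoms: "infinite (UNIV :: 'a set)"
    and NX: "nominal Perm X (aX :: ('a \<Rightarrow> 'a) \<Rightarrow> 'x \<Rightarrow> 'x)" and NY: "nominal Perm Y (aY :: ('a \<Rightarrow> 'a) \<Rightarrow> 'y \<Rightarrow> 'y)"
    and x: "x \<in> X" and y: "y \<in> Y"
  shows "separated aX aY x y \<longleftrightarrow> supp aX x \<inter> supp aY y = {}"
proof
  assume "separated aX aY x y"
  then obtain C D where "finite C" "finite D" "C \<inter> D = {}"
    "is_support Perm aX C x" "is_support Perm aY D y"
    unfolding separated_def by blast
  then show "supp aX x \<inter> supp aY y = {}"
    using supp_least[OF atoms NX x] supp_least[OF atoms NY y] by blast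
next
  assume "supp aX x \<inter> supp aY y = {}"
  then show "separated aX aY x y"
    unfolding separated_def
    using finite_supp[OF atoms NX x] supp_is_support[OF atoms NX x]
      finite_supp[OF atoms NY y] supp_is_support[OF atoms NY y] by blast
qed

section \<open>The functor F\<close>

lemma F_rel_field:
  assumes M: "is_Mset Perm X act" and "(p, q) \<in> F_rel X act"
  shows "p \<in> Sb \<times> X \<and> q \<in> Sb \<times> X"
  using assms(2)
proof (induction rule: F_rel.induct)
  case (F_perm m g x)
  then show ?case
    using Mset_closed[OF M F_perm(2,3)] Sb_comp[OF F_perm(1) Perm_Sb[OF F_perm(2)]] by simp
qed simp_all

lemma equiv_F_rel:
  assumes M: "is_Mset Perm X act"
  shows "equiv (Sb \<times> X) (F_rel X act)"
proof (rule equivI)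
  show "F_rel X act \<subseteq> (Sb \<times> X) \<times> (Sb \<times> X)"
    using F_rel_field[OF M] by auto
  show "refl_on (Sb \<times> X) (F_rel X act)"
    unfolding refl_on_def using F_rel.F_refl by auto
  show "sym (F_rel X act)"
    by (rule symI) (rule F_rel.F_sym)
  show "trans (F_rel X act)"
    by (rule transI) (rule F_rel.F_trans)
qed

lemma F_cls_eqI:
  assumes "is_Mset Perm X act" and "((m, x), (m', x')) \<in> F_rel X act"
  shows "F_cls X act m x = F_cls X act m' x'"
  unfolding F_cls_def using equiv_class_eq[OF equiv_F_rel[OF assms(1)] assms(2)] .

lemma F_cls_eq_iff:
  assumes "is_Mset Perm X act" and "m \<in> Sb" and "m' \<in> Sb" and "x \<in> X" and "x' \<in> X"
  shows "F_cls X act m x = F_cls X act m' x' \<longleftrightarrow> ((m, x), (m', x')) \<in> F_rel X act"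
  unfolding F_cls_def using eq_equiv_class_iff[OF equiv_F_rel[OF assms(1)]] assms(2-) by simp

lemma F_set_iff: "c \<in> F_set X act \<longleftrightarrow> (\<exists>m\<in>Sb. \<exists>x\<in>X. c = F_cls X act m x)"
  unfolding F_set_def quotient_def F_cls_def by blast

lemma F_cls_in_F_set: "m \<in> Sb \<Longrightarrow> x \<in> X \<Longrightarrow> F_cls X act m x \<in> F_set X act"
  using F_set_iff by blast

lemma F_cls_act_Perm:
  assumes "is_Mset Perm X act" and "m \<in> Sb" and "g \<in> Perm" and "x \<in> X"
  shows "F_cls X act m (act g x) = F_cls X act (m \<circ> g) x"
  using assms by (intro F_cls_eqI F_rel.F_perm)

lemma F_cls_support_cong:
  assumes "is_Mset Perm X act" and "m \<in> Sb" and "m' \<in> Sb" and "x \<in> X"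
    and "finite C" and "is_support Perm act C x" and "\<And>a. a \<in> C \<Longrightarrow> m a = m' a"
  shows "F_cls X act m x = F_cls X act m' x"
  using assms by (intro F_cls_eqI F_rel.F_supp) auto

lemma F_rel_some_rep:
  assumes "m \<in> Sb" and "x \<in> X"
  shows "((m, x), (SOME p. p \<in> F_cls X act m x)) \<in> F_rel X act"
proof -
  have "(m, x) \<in> F_cls X act m x"
    unfolding F_cls_def using F_rel.F_refl[OF assms] by simp
  then have "(SOME p. p \<in> F_cls X act m x) \<in> F_cls X act m x"
    by (rule someI)
  then show ?thesis
    unfolding F_cls_def by simp
qed

lemma equivariant_closed: "equivariant M X aX Y aY h \<Longrightarrow> x \<in> X \<Longrightarrow> h x \<in> Y"
  unfolding equivariant_def by blast

lemma equivariant_commute: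
  "equivariant M X aX Y aY h \<Longrightarrow> m \<in> M \<Longrightarrow> x \<in> X \<Longrightarrow> h (aX m x) = aY m (h x)"
  unfolding equivariant_def by blast

lemma is_support_equivariant:
  assumes h: "equivariant Perm X aX Y aY h" and x: "x \<in> X" and supp: "is_support Perm aX C x"
  shows "is_support Perm aY C (h x)"
  unfolding is_support_def
proof (intro ballI impI)
  fix m1 m2
  assume m: "m1 \<in> Perm" "m2 \<in> Perm" and "\<forall>a\<in>C. m1 a = m2 a"
  then have "aX m1 x = aX m2 x"
    using is_supportD[OF supp m] by blast
  then show "aY m1 (h x) = aY m2 (h x)"
    using equivariant_commute[OF h _ x] m by metis
qed

lemma F_rel_map:
  assumes h: "equivariant Perm X aX Y aY h" and "(p, q) \<in> F_rel X aX"
  shows "((fst p, h (snd p)), (fst q, h (snd q))) \<in> F_rel Y aY"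
  using assms(2)
proof (induction rule: F_rel.induct)
  case (F_refl m x)
  then show ?case
    using F_rel.F_refl equivariant_closed[OF h] by fastforce
next
  case (F_perm m g x)
  then show ?case
    using F_rel.F_perm[OF F_perm(1,2) equivariant_closed[OF h F_perm(3)], of aY]
    by (simp add: equivariant_commute[OF h] comp_def)
next
  case (F_supp m m' x C)
  then show ?case
    using F_rel.F_supp[OF F_supp(1,2) equivariant_closed[OF h F_supp(3)] F_supp(4)
        is_support_equivariant[OF h F_supp(3,5)] F_supp(6)] by simp
qed (blast intro: F_rel.F_sym F_rel.F_trans)+

lemma F_map_cls:
  assumes MY: "is_Mset Perm Y aY" and h: "equivariant Perm X aX Y aY h" and "m \<in> Sb" and "x \<in> X"
  shows "F_map Y aY h (F_cls X aX m x) = F_cls Y aY m (h x)"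
proof -
  obtain m0 x0 where rep: "(SOME p. p \<in> F_cls X aX m x) = (m0, x0)"
    by fastforce
  then have "((m, x), (m0, x0)) \<in> F_rel X aX"
    using F_rel_some_rep[OF assms(3,4), of aX] by simp
  then have "((m, h x), (m0, h x0)) \<in> F_rel Y aY"
    using F_rel_map[OF h] by fastforce
  then show ?thesis
    unfolding F_map_def rep using F_cls_eqI[OF MY] by simp
qed

lemma F_rel_comp_left:
  assumes n: "n \<in> Sb" and "(p, q) \<in> F_rel X act"
  shows "((n \<circ> fst p, snd p), (n \<circ> fst q, snd q)) \<in> F_rel X act"
  using assms(2)
proof (induction rule: F_rel.induct)
  case (F_refl m x)
  then show ?case
    using F_rel.F_refl[OF Sb_comp[OF n F_refl(1)] F_refl(2), of act] by (simp add: comp_def)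
next
  case (F_perm m g x)
  then show ?case
    using F_rel.F_perm[OF Sb_comp[OF n F_perm(1)] F_perm(2,3), of act] by (simp add: comp_def)
next
  case (F_supp m m' x C)
  then have "\<forall>a\<in>C. (n \<circ> m) a = (n \<circ> m') a"
    by simp
  then show ?case
    using F_rel.F_supp[OF Sb_comp[OF n F_supp(1)] Sb_comp[OF n F_supp(2)] F_supp(3-5)] by (simp add: comp_def)
qed (blast intro: F_rel.F_sym F_rel.F_trans)+

lemma F_act_cls:
  assumes M: "is_Mset Perm X act" and n: "n \<in> Sb" and "m \<in> Sb" and "x \<in> X"
  shows "F_act X act n (F_cls X act m x) = F_cls X act (n \<circ> m) x"
proof -
  obtain m0 x0 where rep: "(SOME p. p \<in> F_cls X act m x) = (m0, x0)"
    by fastforce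
  then have "((m, x), (m0, x0)) \<in> F_rel X act"
    using F_rel_some_rep[OF assms(3,4), of act] by simp
  then have "((n \<circ> m, x), (n \<circ> m0, x0)) \<in> F_rel X act"
    using F_rel_comp_left[OF n] by fastforce
  then show ?thesis
    unfolding F_act_def rep using F_cls_eqI[OF M] by simp
qed

definition Perm_related :: "(('a \<Rightarrow> 'a) \<Rightarrow> 'x \<Rightarrow> 'x) \<Rightarrow> ('a \<Rightarrow> 'a) \<times> 'x \<Rightarrow> ('a \<Rightarrow> 'a) \<times> 'x \<Rightarrow> bool" where
  "Perm_related act p q \<longleftrightarrow>
     (\<exists>g\<in>Perm. snd q = act g (snd p) \<and> (\<forall>a\<in>supp act (snd p). fst p a = fst q (g a)))"

lemma Perm_related_sym:
  assumes atoms: "infinite (UNIV :: 'a set)" and N: "nominal Perm X (act :: ('a \<Rightarrow> 'a) \<Rightarrow> 'x \<Rightarrow> 'x)"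
    and "snd p \<in> X" and "Perm_related act p q"
  shows "Perm_related act q p"
proof -
  obtain g where g: "g \<in> Perm" "snd q = act g (snd p)" "\<forall>a\<in>supp act (snd p). fst p a = fst q (g a)"
    using assms(4) unfolding Perm_related_def by blast
  have "snd p = act (inv g) (snd q)"
    using g(2) Mset_act_inv[OF nominal_imp_Mset[OF N] g(1) \<open>snd p \<in> X\<close>] by simp
  moreover have "fst q b = fst p (inv g b)" if "b \<in> supp act (snd q)" for b
    using that g(3) supp_act[OF atoms N \<open>snd p \<in> X\<close> g(1)] g(2) Perm_inv_apply[OF g(1)] by auto
  ultimately show ?thesis
    unfolding Perm_related_def using Perm_inv[OF g(1)] by blast
qed

lemma Perm_related_trans:
  assumes atoms: "infinite (UNIV :: 'a set)" and N: "nominal Perm X (act :: ('a \<Rightarrow> 'a) \<Rightarrow> 'x \<Rightarrow> 'x)"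
    and "snd p \<in> X" and "Perm_related act p q" and "Perm_related act q r"
  shows "Perm_related act p r"
proof -
  obtain g where g: "g \<in> Perm" "snd q = act g (snd p)" "\<forall>a\<in>supp act (snd p). fst p a = fst q (g a)"
    using assms(4) unfolding Perm_related_def by blast
  obtain h where h: "h \<in> Perm" "snd r = act h (snd q)" "\<forall>a\<in>supp act (snd q). fst q a = fst r (h a)"
    using assms(5) unfolding Perm_related_def by blast
  have "snd r = act (h \<circ> g) (snd p)"
    using h(2) g(2) Mset_act_comp[OF nominal_imp_Mset[OF N] h(1) g(1) \<open>snd p \<in> X\<close>] by simp
  moreover have "fst p a = fst r ((h \<circ> g) a)" if "a \<in> supp act (snd p)" for a
    using that g(2,3) h(3) supp_act[OF atoms N \<open>snd p \<in> X\<close> g(1)] by simp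
  ultimately show ?thesis
    unfolding Perm_related_def using Perm_comp[OF h(1) g(1)] by blast
qed

lemma F_rel_imp_Perm_related:
  assumes atoms: "infinite (UNIV :: 'a set)" and N: "nominal Perm X (act :: ('a \<Rightarrow> 'a) \<Rightarrow> 'x \<Rightarrow> 'x)"
    and "(p, q) \<in> F_rel X act"
  shows "Perm_related act p q"
  using assms(3)
proof (induction rule: F_rel.induct)
  have M: "is_Mset Perm X act"
    using N by (rule nominal_imp_Mset)
  {
    case (F_refl m x)
    then show ?case
      unfolding Perm_related_def by (intro bexI[of _ id]) (simp_all add: Perm_id Mset_act_id[OF M])
  next
    case (F_perm m g x)
    have "x = act (inv g) (act g x)"
      using Mset_act_inv[OF M F_perm(2,3)] by simp
    moreover have "m a = (m \<circ> g) (inv g a)" for a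
      by (simp add: Perm_bij[OF F_perm(2)] bij_is_surj surj_f_inv_f)
    ultimately show ?case
      unfolding Perm_related_def using Perm_inv[OF F_perm(2)] by auto
  next
    case (F_supp m m' x C)
    then have "supp act x \<subseteq> C"
      using supp_least[OF atoms N] by blast
    then show ?case
      unfolding Perm_related_def using F_supp
      by (intro bexI[of _ id]) (auto simp: Perm_id Mset_act_id[OF M])
  next
    case (F_sym p q)
    have "snd p \<in> X"
      using F_rel_field[OF M F_sym(1)] by auto
    then show ?case
      using Perm_related_sym[OF atoms N] F_sym(2) by blast
  next
    case (F_trans p q r)
    have "snd p \<in> X"
      using F_rel_field[OF M F_trans(1)] by auto
    then show ?case
      using Perm_related_trans[OF atoms N] F_trans(3,4) by blast
  }
qed

lemma F_cls_eq_imp_Perm_related: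
  assumes atoms: "infinite (UNIV :: 'a set)" and N: "nominal Perm X (act :: ('a \<Rightarrow> 'a) \<Rightarrow> 'x \<Rightarrow> 'x)"
    and "m \<in> Sb" and "m' \<in> Sb" and "x \<in> X" and "x' \<in> X"
    and "F_cls X act m x = F_cls X act m' x'"
  shows "Perm_related act (m, x) (m', x')"
proof -
  have "((m, x), (m', x')) \<in> F_rel X act"
    using assms(7) F_cls_eq_iff[OF nominal_imp_Mset[OF N] assms(3-6)] by simp
  then show ?thesis
    by (rule F_rel_imp_Perm_related[OF atoms N])
qed

section \<open>The separated product and the comparison map\<close>

lemma separated_act:
  assumes MX: "is_Mset Perm X aX" and MY: "is_Mset Perm Y aY"
    and "x \<in> X" and "y \<in> Y" and g: "g \<in> Perm" and "separated aX aY x y"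
  shows "separated aX aY (aX g x) (aY g y)"
proof -
  obtain C D where CD: "finite C" "finite D" "C \<inter> D = {}" "is_support Perm aX C x" "is_support Perm aY D y"
    using assms(6) unfolding separated_def by blast
  have "g ` C \<inter> g ` D = {}"
    using CD(3) Perm_bij[OF g] by (simp add: bij_is_inj flip: image_Int)
  then show ?thesis
    unfolding separated_def
    using is_support_image[OF MX \<open>x \<in> X\<close> g CD(4)] is_support_image[OF MY \<open>y \<in> Y\<close> g CD(5)] CD(1,2)
    by blast
qed

lemma is_Mset_sep_prod:
  fixes aX :: "('a \<Rightarrow> 'a) \<Rightarrow> 'x \<Rightarrow> 'x" and aY :: "('a \<Rightarrow> 'a) \<Rightarrow> 'y \<Rightarrow> 'y"
  assumes MX: "is_Mset Perm X aX" and MY: "is_Mset Perm Y aY"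
  shows "is_Mset Perm (sep_prod X aX Y aY) (prod_act aX aY)"
  unfolding is_Mset_def
proof (intro conjI ballI)
  fix g :: "'a \<Rightarrow> 'a" and p
  assume "g \<in> Perm" and "p \<in> sep_prod X aX Y aY"
  then show "prod_act aX aY g p \<in> sep_prod X aX Y aY"
    using Mset_closed[OF MX] Mset_closed[OF MY] separated_act[OF MX MY]
    by (auto simp: sep_prod_def prod_act_def)
next
  fix p
  assume "p \<in> sep_prod X aX Y aY"
  then show "prod_act aX aY id p = p"
    using Mset_act_id[OF MX] Mset_act_id[OF MY] by (auto simp: sep_prod_def prod_act_def)
next
  fix m1 m2 :: "'a \<Rightarrow> 'a" and p
  assume "m1 \<in> Perm" and "m2 \<in> Perm" and "p \<in> sep_prod X aX Y aY"
  then show "prod_act aX aY (m1 \<circ> m2) p = prod_act aX aY m1 (prod_act aX aY m2 p)"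
    using Mset_act_comp[OF MX] Mset_act_comp[OF MY] by (auto simp: sep_prod_def prod_act_def)
qed

lemma separated_equivariant:
  assumes f: "equivariant Perm X aX X' aX' f" and g: "equivariant Perm Y aY Y' aY' g"
    and "x \<in> X" and "y \<in> Y" and "separated aX aY x y"
  shows "separated aX' aY' (f x) (g y)"
  using assms(5) is_support_equivariant[OF f \<open>x \<in> X\<close>] is_support_equivariant[OF g \<open>y \<in> Y\<close>]
  unfolding separated_def by blast

lemma is_support_supp_pair:
  assumes atoms: "infinite (UNIV :: 'a set)"
    and NX: "nominal Perm X (aX :: ('a \<Rightarrow> 'a) \<Rightarrow> 'x \<Rightarrow> 'x)" and NY: "nominal Perm Y (aY :: ('a \<Rightarrow> 'a) \<Rightarrow> 'y \<Rightarrow> 'y)"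
    and "x \<in> X" and "y \<in> Y"
  shows "is_support Perm (prod_act aX aY) (supp aX x \<union> supp aY y) (x, y)"
  unfolding is_support_prod_act_iff
  using is_support_mono[OF supp_is_support[OF atoms NX \<open>x \<in> X\<close>]]
    is_support_mono[OF supp_is_support[OF atoms NY \<open>y \<in> Y\<close>]] by blast

lemma equivariant_fst: "equivariant Perm (sep_prod X aX Y aY) (prod_act aX aY) X aX fst"
  unfolding equivariant_def by (auto simp: sep_prod_def prod_act_def)

lemma equivariant_snd: "equivariant Perm (sep_prod X aX Y aY) (prod_act aX aY) Y aY snd"
  unfolding equivariant_def by (auto simp: sep_prod_def prod_act_def)

lemma p_map_cls:
  assumes "is_Mset Perm X aX" and "is_Mset Perm Y aY" and "m \<in> Sb" and "(x, y) \<in> sep_prod X aX Y aY"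
  shows "p_map X aX Y aY (F_cls (sep_prod X aX Y aY) (prod_act aX aY) m (x, y))
    = (F_cls X aX m x, F_cls Y aY m y)"
  unfolding p_map_def
  using F_map_cls[OF assms(1) equivariant_fst assms(3,4)] F_map_cls[OF assms(2) equivariant_snd assms(3,4)]
  by simp

lemma F_set_sep_prodE:
  assumes "c \<in> F_set (sep_prod X aX Y aY) (prod_act aX aY)"
  obtains m x y where "m \<in> Sb" and "x \<in> X" and "y \<in> Y" and "separated aX aY x y"
    and "c = F_cls (sep_prod X aX Y aY) (prod_act aX aY) m (x, y)"
  using assms unfolding F_set_iff sep_prod_def by blast

lemma F_unit_singleton: "\<exists>z. F_set ({()} :: unit set) (\<lambda>(_ :: 'a \<Rightarrow> 'a) u. u) = {z}"
proof -
  define act where "act = (\<lambda>(_ :: 'a \<Rightarrow> 'a) (u :: unit). u)"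
  have M: "is_Mset Perm {()} act"
    unfolding is_Mset_def act_def by simp
  have supp: "is_support Perm act {} ()"
    unfolding is_support_def act_def by simp
  have trivial: "F_cls {()} act m () = F_cls {()} act id ()" if "m \<in> Sb" for m
    using F_cls_support_cong[OF M that Sb_id _ _ supp] by simp
  have "F_set {()} act = {F_cls {()} act id ()}"
  proof
    show "F_set {()} act \<subseteq> {F_cls {()} act id ()}"
    proof
      fix c
      assume "c \<in> F_set {()} act"
      then obtain m where "m \<in> Sb" and "c = F_cls {()} act m ()"
        unfolding F_set_iff by blast
      then show "c \<in> {F_cls {()} act id ()}"
        using trivial by simp
    qed
    show "{F_cls {()} act id ()} \<subseteq> F_set {()} act"
      using F_cls_in_F_set[OF Sb_id, of "()" "{()}" act] by simp
  qed
  then show ?thesis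
    unfolding act_def by blast
qed

lemma equivariant_p_map:
  fixes aX :: "('a \<Rightarrow> 'a) \<Rightarrow> 'x \<Rightarrow> 'x" and aY :: "('a \<Rightarrow> 'a) \<Rightarrow> 'y \<Rightarrow> 'y"
  assumes MX: "is_Mset Perm X aX" and MY: "is_Mset Perm Y aY"
  shows "equivariant Sb
      (F_set (sep_prod X aX Y aY) (prod_act aX aY)) (F_act (sep_prod X aX Y aY) (prod_act aX aY))
      (F_set X aX \<times> F_set Y aY) (prod_act (F_act X aX) (F_act Y aY))
      (p_map X aX Y aY)"
  unfolding equivariant_def
proof (intro conjI ballI)
  fix c
  assume "c \<in> F_set (sep_prod X aX Y aY) (prod_act aX aY)"
  then obtain m x y where m: "m \<in> Sb" and x: "x \<in> X" and y: "y \<in> Y" and "separated aX aY x y"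
    and c: "c = F_cls (sep_prod X aX Y aY) (prod_act aX aY) m (x, y)"
    by (rule F_set_sep_prodE)
  then have xy: "(x, y) \<in> sep_prod X aX Y aY"
    by (simp add: sep_prod_def)
  have pc: "p_map X aX Y aY c = (F_cls X aX m x, F_cls Y aY m y)"
    unfolding c by (rule p_map_cls[OF MX MY m xy])
  then show "p_map X aX Y aY c \<in> F_set X aX \<times> F_set Y aY"
    using F_cls_in_F_set[OF m x] F_cls_in_F_set[OF m y] by simp
  fix n :: "'a \<Rightarrow> 'a"
  assume n: "n \<in> Sb"
  have "F_act (sep_prod X aX Y aY) (prod_act aX aY) n c
      = F_cls (sep_prod X aX Y aY) (prod_act aX aY) (n \<circ> m) (x, y)"
    unfolding c by (rule F_act_cls[OF is_Mset_sep_prod[OF MX MY] n m xy])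
  then show "p_map X aX Y aY (F_act (sep_prod X aX Y aY) (prod_act aX aY) n c)
      = prod_act (F_act X aX) (F_act Y aY) n (p_map X aX Y aY c)"
    using p_map_cls[OF MX MY Sb_comp[OF n m] xy] F_act_cls[OF MX n m x] F_act_cls[OF MY n m y]
    by (simp add: pc prod_act_def)
qed

lemma p_map_surj:
  assumes atoms: "infinite (UNIV :: 'a set)"
    and NX: "nominal Perm X (aX :: ('a \<Rightarrow> 'a) \<Rightarrow> 'x \<Rightarrow> 'x)" and NY: "nominal Perm Y (aY :: ('a \<Rightarrow> 'a) \<Rightarrow> 'y \<Rightarrow> 'y)"
    and "c1 \<in> F_set X aX" and "c2 \<in> F_set Y aY"
  shows "(c1, c2) \<in> p_map X aX Y aY ` F_set (sep_prod X aX Y aY) (prod_act aX aY)"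
proof -
  have MX: "is_Mset Perm X aX" and MY: "is_Mset Perm Y aY"
    using NX NY by (simp_all add: nominal_imp_Mset)
  obtain m1 x where m1: "m1 \<in> Sb" and x: "x \<in> X" and c1: "c1 = F_cls X aX m1 x"
    using \<open>c1 \<in> F_set X aX\<close> unfolding F_set_iff by blast
  obtain m2 y where m2: "m2 \<in> Sb" and y: "y \<in> Y" and c2: "c2 = F_cls Y aY m2 y"
    using \<open>c2 \<in> F_set Y aY\<close> unfolding F_set_iff by blast
  obtain \<tau> where \<tau>: "\<tau> \<in> Perm" "\<And>b. b \<in> supp aY y \<Longrightarrow> \<tau> b \<notin> supp aX x"
    using obtain_fresh_Perm[OF atoms finite.emptyI finite_supp[OF atoms NY y] finite_supp[OF atoms NX x]]
    by auto
  define y' where "y' = aY \<tau> y"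
  have y': "y' \<in> Y"
    unfolding y'_def using Mset_closed[OF MY \<tau>(1) y] .
  have disjoint: "supp aX x \<inter> supp aY y' = {}"
    unfolding y'_def supp_act[OF atoms NY y \<tau>(1)] using \<tau>(2) by blast
  have m2': "m2 \<circ> inv \<tau> \<in> Sb"
    using Sb_comp[OF m2 Perm_Sb[OF Perm_inv[OF \<tau>(1)]]] .
  define m where "m = override_on (m2 \<circ> inv \<tau>) m1 (supp aX x)"
  have m: "m \<in> Sb"
    unfolding m_def using Sb_override_on[OF m2' m1] .
  have "F_cls X aX m x = c1"
    unfolding c1 using F_cls_support_cong[OF MX m m1 x finite_supp[OF atoms NX x] supp_is_support[OF atoms NX x]]
    by (simp add: m_def override_on_def)
  moreover have "F_cls Y aY m y' = c2"
  proof -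
    have "F_cls Y aY m y' = F_cls Y aY (m2 \<circ> inv \<tau>) y'"
      by (rule F_cls_support_cong[OF MY m m2' y' finite_supp[OF atoms NY y'] supp_is_support[OF atoms NY y']])
        (use disjoint in \<open>auto simp: m_def override_on_def\<close>)
    also have "\<dots> = F_cls Y aY (m2 \<circ> inv \<tau> \<circ> \<tau>) y"
      unfolding y'_def by (rule F_cls_act_Perm[OF MY m2' \<tau>(1) y])
    finally show ?thesis
      using c2 \<tau>(1) by (simp add: comp_assoc Perm_inv_comp)
  qed
  moreover have "(x, y') \<in> sep_prod X aX Y aY"
    using separated_iff_disjoint_supp[OF atoms NX NY x y'] disjoint x y' by (simp add: sep_prod_def)
  ultimately show ?thesis
    using p_map_cls[OF MX MY m] F_cls_in_F_set[OF m] by (metis image_eqI)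
qed

lemma p_map_image:
  assumes atoms: "infinite (UNIV :: 'a set)"
    and NX: "nominal Perm X (aX :: ('a \<Rightarrow> 'a) \<Rightarrow> 'x \<Rightarrow> 'x)" and NY: "nominal Perm Y (aY :: ('a \<Rightarrow> 'a) \<Rightarrow> 'y \<Rightarrow> 'y)"
  shows "p_map X aX Y aY ` F_set (sep_prod X aX Y aY) (prod_act aX aY) = F_set X aX \<times> F_set Y aY"
  using equivariant_closed[OF equivariant_p_map[OF nominal_imp_Mset[OF NX] nominal_imp_Mset[OF NY]]]
    p_map_surj[OF atoms NX NY] by blast

lemma F_cls_sep_prod_eqI:
  assumes atoms: "infinite (UNIV :: 'a set)"
    and NX: "nominal Perm X (aX :: ('a \<Rightarrow> 'a) \<Rightarrow> 'x \<Rightarrow> 'x)" and NY: "nominal Perm Y (aY :: ('a \<Rightarrow> 'a) \<Rightarrow> 'y \<Rightarrow> 'y)"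
    and m: "m \<in> Sb" and m': "m' \<in> Sb"
    and xy: "(x, y) \<in> sep_prod X aX Y aY" and xy': "(x', y') \<in> sep_prod X aX Y aY"
    and "Perm_related aX (m, x) (m', x')" and "Perm_related aY (m, y) (m', y')"
  shows "F_cls (sep_prod X aX Y aY) (prod_act aX aY) m (x, y)
    = F_cls (sep_prod X aX Y aY) (prod_act aX aY) m' (x', y')"
proof -
  have M: "is_Mset Perm (sep_prod X aX Y aY) (prod_act aX aY)"
    using NX NY by (simp add: is_Mset_sep_prod nominal_imp_Mset)
  have x: "x \<in> X" and y: "y \<in> Y" and sep: "separated aX aY x y"
    and x': "x' \<in> X" and y': "y' \<in> Y" and sep': "separated aX aY x' y'"
    using xy xy' by (simp_all add: sep_prod_def)
  obtain g h where g: "g \<in> Perm" "x' = aX g x" "\<And>a. a \<in> supp aX x \<Longrightarrow> m a = m' (g a)"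
    and h: "h \<in> Perm" "y' = aY h y" "\<And>a. a \<in> supp aY y \<Longrightarrow> m a = m' (h a)"
    using assms(8,9) unfolding Perm_related_def by auto
  have "supp aX x \<inter> supp aY y = {}"
    using sep separated_iff_disjoint_supp[OF atoms NX NY x y] by simp
  moreover have "g ` supp aX x \<inter> h ` supp aY y = {}"
    using sep' separated_iff_disjoint_supp[OF atoms NX NY x' y']
    by (simp add: g(2) h(2) supp_act[OF atoms NX x g(1)] supp_act[OF atoms NY y h(1)])
  ultimately have "\<exists>k\<in>Perm. (\<forall>a\<in>supp aX x. k a = g a) \<and> (\<forall>b\<in>supp aY y. k b = h b)"
    by (intro Perm_glue[OF g(1) h(1) finite_supp[OF atoms NX x] finite_supp[OF atoms NY y]])
  then obtain k where k: "k \<in> Perm" "\<And>a. a \<in> supp aX x \<Longrightarrow> k a = g a" "\<And>b. b \<in> supp aY y \<Longrightarrow> k b = h b"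
    by blast
  have "aX k x = x'" and "aY k y = y'"
    using is_supportD[OF supp_is_support[OF atoms NX x] k(1) g(1) k(2)]
      is_supportD[OF supp_is_support[OF atoms NY y] k(1) h(1) k(3)] g(2) h(2) by simp_all
  have "F_cls (sep_prod X aX Y aY) (prod_act aX aY) m (x, y)
      = F_cls (sep_prod X aX Y aY) (prod_act aX aY) (m' \<circ> k) (x, y)"
  proof (rule F_cls_support_cong[OF M m Sb_comp[OF m' Perm_Sb[OF k(1)]] xy _
        is_support_supp_pair[OF atoms NX NY x y]])
    show "finite (supp aX x \<union> supp aY y)"
      using finite_supp[OF atoms NX x] finite_supp[OF atoms NY y] by simp
    show "m a = (m' \<circ> k) a" if "a \<in> supp aX x \<union> supp aY y" for a
      using that g(3) h(3) k(2,3) by auto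
  qed
  also have "\<dots> = F_cls (sep_prod X aX Y aY) (prod_act aX aY) m' (prod_act aX aY k (x, y))"
    by (rule F_cls_act_Perm[OF M m' k(1) xy, symmetric])
  also have "\<dots> = F_cls (sep_prod X aX Y aY) (prod_act aX aY) m' (x', y')"
    by (simp add: prod_act_def \<open>aX k x = x'\<close> \<open>aY k y = y'\<close>)
  finally show ?thesis .
qed

lemma inj_on_p_map:
  assumes atoms: "infinite (UNIV :: 'a set)"
    and NX: "nominal Perm X (aX :: ('a \<Rightarrow> 'a) \<Rightarrow> 'x \<Rightarrow> 'x)" and NY: "nominal Perm Y (aY :: ('a \<Rightarrow> 'a) \<Rightarrow> 'y \<Rightarrow> 'y)"
  shows "inj_on (p_map X aX Y aY) (F_set (sep_prod X aX Y aY) (prod_act aX aY))"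
proof (rule inj_onI)
  have MX: "is_Mset Perm X aX" and MY: "is_Mset Perm Y aY"
    using NX NY by (simp_all add: nominal_imp_Mset)
  fix c c'
  assume "c \<in> F_set (sep_prod X aX Y aY) (prod_act aX aY)"
    and "c' \<in> F_set (sep_prod X aX Y aY) (prod_act aX aY)"
    and p_eq: "p_map X aX Y aY c = p_map X aX Y aY c'"
  obtain m x y where m: "m \<in> Sb" and x: "x \<in> X" and y: "y \<in> Y" and "separated aX aY x y"
    and c: "c = F_cls (sep_prod X aX Y aY) (prod_act aX aY) m (x, y)"
    using \<open>c \<in> _\<close> by (rule F_set_sep_prodE)
  then have xy: "(x, y) \<in> sep_prod X aX Y aY"
    by (simp add: sep_prod_def)
  obtain m' x' y' where m': "m' \<in> Sb" and x': "x' \<in> X" and y': "y' \<in> Y" and "separated aX aY x' y'"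
    and c': "c' = F_cls (sep_prod X aX Y aY) (prod_act aX aY) m' (x', y')"
    using \<open>c' \<in> _\<close> by (rule F_set_sep_prodE)
  then have xy': "(x', y') \<in> sep_prod X aX Y aY"
    by (simp add: sep_prod_def)
  have "F_cls X aX m x = F_cls X aX m' x'" and "F_cls Y aY m y = F_cls Y aY m' y'"
    using p_eq p_map_cls[OF MX MY m xy] p_map_cls[OF MX MY m' xy'] by (simp_all add: c c')
  then show "c = c'"
    unfolding c c'
    by (intro F_cls_sep_prod_eqI[OF atoms NX NY m m' xy xy'] F_cls_eq_imp_Perm_related[OF atoms NX m m' x x']
        F_cls_eq_imp_Perm_related[OF atoms NY m m' y y'])
qed

lemma equivariant_sep_prod_map:
  fixes aX :: "('a \<Rightarrow> 'a) \<Rightarrow> 'x \<Rightarrow> 'x" and aY :: "('a \<Rightarrow> 'a) \<Rightarrow> 'y \<Rightarrow> 'y"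
  assumes f: "equivariant Perm X aX X' aX' f" and g: "equivariant Perm Y aY Y' aY' g"
  shows "equivariant Perm (sep_prod X aX Y aY) (prod_act aX aY) (sep_prod X' aX' Y' aY') (prod_act aX' aY')
           (\<lambda>(x, y). (f x, g y))"
  unfolding equivariant_def
proof (intro conjI ballI)
  fix p
  assume "p \<in> sep_prod X aX Y aY"
  then show "(\<lambda>(x, y). (f x, g y)) p \<in> sep_prod X' aX' Y' aY'"
    using equivariant_closed[OF f] equivariant_closed[OF g] separated_equivariant[OF f g]
    by (auto simp: sep_prod_def)
  fix m :: "'a \<Rightarrow> 'a"
  assume "m \<in> Perm"
  with \<open>p \<in> sep_prod X aX Y aY\<close> show "(\<lambda>(x, y). (f x, g y)) (prod_act aX aY m p)
      = prod_act aX' aY' m ((\<lambda>(x, y). (f x, g y)) p)"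
    using equivariant_commute[OF f] equivariant_commute[OF g] by (auto simp: sep_prod_def prod_act_def)
qed

lemma p_map_natural:
  assumes MX: "is_Mset Perm X aX" and MY: "is_Mset Perm Y aY"
    and MX': "is_Mset Perm X' aX'" and MY': "is_Mset Perm Y' aY'"
    and f: "equivariant Perm X aX X' aX' f" and g: "equivariant Perm Y aY Y' aY' g"
    and "c \<in> F_set (sep_prod X aX Y aY) (prod_act aX aY)"
  shows "p_map X' aX' Y' aY' (F_map (sep_prod X' aX' Y' aY') (prod_act aX' aY') (\<lambda>(x, y). (f x, g y)) c)
    = (F_map X' aX' f (fst (p_map X aX Y aY c)), F_map Y' aY' g (snd (p_map X aX Y aY c)))"
proof -
  note fg = equivariant_sep_prod_map[OF f g]
  obtain m x y where m: "m \<in> Sb" and x: "x \<in> X" and y: "y \<in> Y" and "separated aX aY x y"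
    and c: "c = F_cls (sep_prod X aX Y aY) (prod_act aX aY) m (x, y)"
    using assms(7) by (rule F_set_sep_prodE)
  then have xy: "(x, y) \<in> sep_prod X aX Y aY"
    by (simp add: sep_prod_def)
  have fxgy: "(f x, g y) \<in> sep_prod X' aX' Y' aY'"
    using equivariant_closed[OF fg xy] by simp
  show ?thesis
    using F_map_cls[OF is_Mset_sep_prod[OF MX' MY'] fg m xy] p_map_cls[OF MX' MY' m fxgy]
      p_map_cls[OF MX MY m xy] F_map_cls[OF MX' f m x] F_map_cls[OF MY' g m y]
    by (simp add: c)
qed

lemma equivariant_sep_prod_assoc:
  assumes atoms: "infinite (UNIV :: 'a set)"
    and NX: "nominal Perm X (aX :: ('a \<Rightarrow> 'a) \<Rightarrow> 'x \<Rightarrow> 'x)" and NY: "nominal Perm Y (aY :: ('a \<Rightarrow> 'a) \<Rightarrow> 'y \<Rightarrow> 'y)"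
    and NZ: "nominal Perm Z (aZ :: ('a \<Rightarrow> 'a) \<Rightarrow> 'z \<Rightarrow> 'z)"
  shows "equivariant Perm
     (sep_prod (sep_prod X aX Y aY) (prod_act aX aY) Z aZ) (prod_act (prod_act aX aY) aZ)
     (sep_prod X aX (sep_prod Y aY Z aZ) (prod_act aY aZ)) (prod_act aX (prod_act aY aZ))
     (\<lambda>((x, y), z). (x, (y, z)))"
  unfolding equivariant_def
proof (intro conjI ballI)
  fix q
  assume q: "q \<in> sep_prod (sep_prod X aX Y aY) (prod_act aX aY) Z aZ"
  obtain x y z where xyz: "q = ((x, y), z)"
    by (metis prod.collapse)
  have x: "x \<in> X" and y: "y \<in> Y" and z: "z \<in> Z" and sep_xy: "separated aX aY x y"
    and sep_xy_z: "separated (prod_act aX aY) aZ (x, y) z"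
    using q by (simp_all add: xyz sep_prod_def)
  obtain E D where "finite E" "finite D" "E \<inter> D = {}"
    and supp_E: "is_support Perm aX E x" "is_support Perm aY E y" and supp_D: "is_support Perm aZ D z"
    using sep_xy_z unfolding separated_def is_support_prod_act_iff by blast
  have sep_yz: "separated aY aZ y z"
    unfolding separated_def using \<open>finite E\<close> \<open>finite D\<close> \<open>E \<inter> D = {}\<close> supp_E(2) supp_D by blast
  have "supp aX x \<subseteq> E" and "supp aZ z \<subseteq> D"
    using supp_least[OF atoms NX x \<open>finite E\<close> supp_E(1)] supp_least[OF atoms NZ z \<open>finite D\<close> supp_D] .
  moreover have "supp aX x \<inter> supp aY y = {}"
    using sep_xy separated_iff_disjoint_supp[OF atoms NX NY x y] by simp
  ultimately have "supp aX x \<inter> (supp aY y \<union> supp aZ z) = {}"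
    using \<open>E \<inter> D = {}\<close> by blast
  moreover have "finite (supp aY y \<union> supp aZ z)"
    using finite_supp[OF atoms NY y] finite_supp[OF atoms NZ z] by simp
  ultimately have "separated aX (prod_act aY aZ) x (y, z)"
    unfolding separated_def
    using finite_supp[OF atoms NX x] supp_is_support[OF atoms NX x] is_support_supp_pair[OF atoms NY NZ y z]
    by blast
  then show "(\<lambda>((x, y), z). (x, (y, z))) q \<in> sep_prod X aX (sep_prod Y aY Z aZ) (prod_act aY aZ)"
    using x y z sep_yz by (simp add: xyz sep_prod_def)
  fix m :: "'a \<Rightarrow> 'a"
  show "(\<lambda>((x, y), z). (x, (y, z))) (prod_act (prod_act aX aY) aZ m q)
      = prod_act aX (prod_act aY aZ) m ((\<lambda>((x, y), z). (x, (y, z))) q)"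
    by (simp add: xyz prod_act_def)
qed

lemma p_map_assoc:
  assumes atoms: "infinite (UNIV :: 'a set)"
    and NX: "nominal Perm X (aX :: ('a \<Rightarrow> 'a) \<Rightarrow> 'x \<Rightarrow> 'x)" and NY: "nominal Perm Y (aY :: ('a \<Rightarrow> 'a) \<Rightarrow> 'y \<Rightarrow> 'y)"
    and NZ: "nominal Perm Z (aZ :: ('a \<Rightarrow> 'a) \<Rightarrow> 'z \<Rightarrow> 'z)"
    and "c \<in> F_set (sep_prod (sep_prod X aX Y aY) (prod_act aX aY) Z aZ) (prod_act (prod_act aX aY) aZ)"
  shows "let (c12, c3) = p_map (sep_prod X aX Y aY) (prod_act aX aY) Z aZ c;
              (c1, c2) = p_map X aX Y aY c12;
              c' = F_map (sep_prod X aX (sep_prod Y aY Z aZ) (prod_act aY aZ)) (prod_act aX (prod_act aY aZ))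
                     (\<lambda>((x, y), z). (x, (y, z))) c;
              (d1, d23) = p_map X aX (sep_prod Y aY Z aZ) (prod_act aY aZ) c';
              (d2, d3) = p_map Y aY Z aZ d23
          in (c1, c2, c3) = (d1, d2, d3)"
proof -
  have MX: "is_Mset Perm X aX" and MY: "is_Mset Perm Y aY" and MZ: "is_Mset Perm Z aZ"
    using NX NY NZ by (simp_all add: nominal_imp_Mset)
  note MYZ = is_Mset_sep_prod[OF MY MZ]
  note assoc = equivariant_sep_prod_assoc[OF atoms NX NY NZ]
  obtain m xy z where m: "m \<in> Sb" and "xy \<in> sep_prod X aX Y aY" and "z \<in> Z"
    and "separated (prod_act aX aY) aZ xy z"
    and c: "c = F_cls (sep_prod (sep_prod X aX Y aY) (prod_act aX aY) Z aZ) (prod_act (prod_act aX aY) aZ) m (xy, z)"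
    using assms(5) by (rule F_set_sep_prodE)
  moreover obtain x y where xy: "xy = (x, y)"
    by fastforce
  ultimately have x_y: "(x, y) \<in> sep_prod X aX Y aY"
    and xy_z: "((x, y), z) \<in> sep_prod (sep_prod X aX Y aY) (prod_act aX aY) Z aZ"
    by (simp_all add: sep_prod_def)
  have x_yz: "(x, (y, z)) \<in> sep_prod X aX (sep_prod Y aY Z aZ) (prod_act aY aZ)"
    using equivariant_closed[OF assoc xy_z] by simp
  then have y_z: "(y, z) \<in> sep_prod Y aY Z aZ"
    by (simp add: sep_prod_def)
  show ?thesis
    using p_map_cls[OF is_Mset_sep_prod[OF MX MY] MZ m xy_z] p_map_cls[OF MX MY m x_y]
      F_map_cls[OF is_Mset_sep_prod[OF MX MYZ] assoc m xy_z] p_map_cls[OF MX MYZ m x_yz]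
      p_map_cls[OF MY MZ m y_z]
    by (simp add: c xy Let_def)
qed

theorem mainTheorem2:
  fixes X :: "'x set" and aX :: "('a::countable \<Rightarrow> 'a) \<Rightarrow> 'x \<Rightarrow> 'x"
    and Y :: "'y set" and aY :: "('a \<Rightarrow> 'a) \<Rightarrow> 'y \<Rightarrow> 'y"
    and Z :: "'z set" and aZ :: "('a \<Rightarrow> 'a) \<Rightarrow> 'z \<Rightarrow> 'z"
    and X' :: "'u set" and aX' :: "('a \<Rightarrow> 'a) \<Rightarrow> 'u \<Rightarrow> 'u"
    and Y' :: "'v set" and aY' :: "('a \<Rightarrow> 'a) \<Rightarrow> 'v \<Rightarrow> 'v"
    and f :: "'x \<Rightarrow> 'u" and g :: "'y \<Rightarrow> 'v"
  assumes atoms: "infinite (UNIV :: 'a set)"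
    and nX: "nominal Perm X aX" and nY: "nominal Perm Y aY" and nZ: "nominal Perm Z aZ"
    and nX': "nominal Perm X' aX'" and nY': "nominal Perm Y' aY'"
    and ef: "equivariant Perm X aX X' aX' f" and eg: "equivariant Perm Y aY Y' aY' g"
  shows
    \<comment> \<open>unit: F(1) is (isomorphic to) the terminal nominal Sb-set 1\<close>
    "(\<exists>z. F_set ({()} :: unit set) (\<lambda>(_ :: 'a \<Rightarrow> 'a) u. u) = {z})
     \<comment> \<open>p is an isomorphism of nominal Sb-sets F(X (x) Y) -> F(X) x F(Y)\<close>
     \<and> bij_betw (p_map X aX Y aY)
         (F_set (sep_prod X aX Y aY) (prod_act aX aY)) (F_set X aX \<times> F_set Y aY)
     \<and> equivariant Sb
         (F_set (sep_prod X aX Y aY) (prod_act aX aY)) (F_act (sep_prod X aX Y aY) (prod_act aX aY))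
         (F_set X aX \<times> F_set Y aY) (prod_act (F_act X aX) (F_act Y aY))
         (p_map X aX Y aY)
     \<comment> \<open>naturality in X and Y\<close>
     \<and> (\<forall>c \<in> F_set (sep_prod X aX Y aY) (prod_act aX aY).
          p_map X' aX' Y' aY'
            (F_map (sep_prod X' aX' Y' aY') (prod_act aX' aY') (\<lambda>(x, y). (f x, g y)) c)
          = (F_map X' aX' f (fst (p_map X aX Y aY c)), F_map Y' aY' g (snd (p_map X aX Y aY c))))
     \<comment> \<open>associativity coherence\<close>
     \<and> (\<forall>c \<in> F_set (sep_prod (sep_prod X aX Y aY) (prod_act aX aY) Z aZ) (prod_act (prod_act aX aY) aZ).
          let (c12, c3) = p_map (sep_prod X aX Y aY) (prod_act aX aY) Z aZ c;
              (c1, c2) = p_map X aX Y aY c12;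
              c' = F_map (sep_prod X aX (sep_prod Y aY Z aZ) (prod_act aY aZ)) (prod_act aX (prod_act aY aZ))
                     (\<lambda>((x, y), z). (x, (y, z))) c;
              (d1, d23) = p_map X aX (sep_prod Y aY Z aZ) (prod_act aY aZ) c';
              (d2, d3) = p_map Y aY Z aZ d23
          in (c1, c2, c3) = (d1, d2, d3))"
proof -
  have MX: "is_Mset Perm X aX" and MY: "is_Mset Perm Y aY"
    and MX': "is_Mset Perm X' aX'" and MY': "is_Mset Perm Y' aY'"
    using nX nY nX' nY' by (simp_all add: nominal_imp_Mset)
  show ?thesis
    unfolding bij_betw_def
    using F_unit_singleton inj_on_p_map[OF atoms nX nY] p_map_image[OF atoms nX nY]
      equivariant_p_map[OF MX MY] p_map_natural[OF MX MY MX' MY' ef eg] p_map_assoc[OF atoms nX nY nZ]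
    by blast
qed

end
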